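(* Let $T$ be a CPTP map with operator-sum representation $\{M_k\}$ and $\mathcal{H}_S$ a GAS subspace, and let $\mathcal{H}=\mathcal{H}_S\oplus\mathcal{H}_{T_1}\oplus\cdots\oplus\mathcal{H}_{T_N}$ be the decomposition produced by the DID construction started from $\mathcal{H}_S$. Then for $1\le n\le N$, $$\mathrm{supp}(T^{*n}(\Pi_S))=\mathcal{H}_S\oplus\bigoplus_{i=1}^n\mathcal{H}_{T_i},$$ and for $n>N$, $\mathrm{supp}(T^{*n}(\Pi_S))=\mathcal{H}$. In particular the DID subspaces do not depend on the chosen operator-sum representation.
   Context: $\mathcal{H}$ is a finite-dimensional complex Hilbert space; $T$ is CPTP: $T(\rho)=\sum_kM_k\rho M_k^\dagger$, $\sum_kM_k^\dagger M_k=I$, with dual $T^*(A)=\sum_kM_k^\dagger AM_k$. $\Pi_S$ is the orthogonal projection onto $\mathcal{H}_S$; $\mathrm{supp}(X)=(\ker X)^\perp$. $\mathcal{H}_S$ is invariant if $\rho\ge0$, $\mathrm{supp}(\rho)\subseteq\mathcal{H}_S$ implies $\mathrm{supp}(T(\rho))\subseteq\mathcal{H}_S$; an invariant $\mathcal{H}_S$ is GAS if $\lim_n\|T^n(\rho)-\Pi_ST^n(\rho)\Pi_S\|=0$ for every density operator $\rho$. DID construction: $\mathcal{H}_{S_1}=\mathcal{H}_S$, $\mathcal{H}_{R_1}=\mathcal{H}_S^\perp$; at step $i$, $M_{k,P'_i}=\Pi_{S_i}M_k|_{\mathcal{H}_{R_i}}:\mathcal{H}_{R_i}\to\mathcal{H}_{S_i}$,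 $\mathcal{H}_{R_{i+1}}=\bigcap_k\ker(M_{k,P'_i})$. (1) If $\mathcal{H}_{R_{i+1}}=\mathcal{H}_{R_i}$, set $\mathcal{H}_{T_i}=\mathcal{H}_{R_i}$ and stop (unsuccessful). (2) If $\mathcal{H}_{R_{i+1}}=\{0\}$, set $\mathcal{H}_{T_i}=\mathcal{H}_{R_i}$ and stop (successful). (3) Otherwise $\mathcal{H}_{T_i}$ is the orthogonal complement of $\mathcal{H}_{R_{i+1}}$ in $\mathcal{H}_{R_i}$, $\mathcal{H}_{S_{i+1}}=\mathcal{H}_{S_i}\oplus\mathcal{H}_{T_i}$, iterate. $N$ is the index of the final step. *)

theory Defs
  imports "HOL-Analysis.Analysis"
begin

text \<open>The Hilbert space is modelled as complex^'n (finite type 'n, dimension CARD('n));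
  operators are complex matrices complex^'n^'n acting by *v.\<close>

type_synonym 'n cvec = "complex^'n"
type_synonym 'n cmat = "complex^'n^'n"

definition cinner :: "'n::finite cvec \<Rightarrow> 'n cvec \<Rightarrow> complex" where
  "cinner x y = (\<Sum>i\<in>UNIV. cnj (x $ i) * y $ i)"

definition adj :: "'n::finite cmat \<Rightarrow> 'n cmat" where
  "adj A = (\<chi> i j. cnj (A $ j $ i))"

definition csubspace :: "'n::finite cvec set \<Rightarrow> bool" where
  "csubspace S \<longleftrightarrow> 0 \<in> S \<and> (\<forall>x\<in>S. \<forall>y\<in>S. x + y \<in> S) \<and> (\<forall>c. \<forall>x\<in>S. c *s x \<in> S)"

definition orth_compl :: "'n::finite cvec set \<Rightarrow> 'n cvec set" where
  "orth_compl S = {x. \<forall>y\<in>S. cinner y x = 0}"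

definition ker :: "'n::finite cmat \<Rightarrow> 'n cvec set" where
  "ker X = {x. X *v x = 0}"

definition supp :: "'n::finite cmat \<Rightarrow> 'n cvec set" where
  "supp X = orth_compl (ker X)"

text \<open>Sum of two subspaces (used for orthogonal direct sums).\<close>
definition ssum :: "'n::finite cvec set \<Rightarrow> 'n cvec set \<Rightarrow> 'n cvec set" (infixl \<open>\<oplus>\<^sub>s\<close> 65) where
  "A \<oplus>\<^sub>s B = {a + b | a b. a \<in> A \<and> b \<in> B}"

definition is_orth_proj :: "'n::finite cmat \<Rightarrow> 'n cvec set \<Rightarrow> bool" where
  "is_orth_proj P S \<longleftrightarrow> adj P = P \<and> P ** P = P \<and> range (\<lambda>x. P *v x) = S"

definition psd :: "'n::finite cmat \<Rightarrow> bool" where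
  "psd A \<longleftrightarrow> (\<forall>x. Im (cinner x (A *v x)) = 0 \<and> Re (cinner x (A *v x)) \<ge> 0)"

definition density :: "'n::finite cmat \<Rightarrow> bool" where
  "density \<rho> \<longleftrightarrow> psd \<rho> \<and> trace \<rho> = 1"

definition kraus_family :: "'n::finite cmat list \<Rightarrow> bool" where
  "kraus_family Ms \<longleftrightarrow> sum_list (map (\<lambda>M. adj M ** M) Ms) = mat 1"

definition kraus_map :: "'n::finite cmat list \<Rightarrow> 'n cmat \<Rightarrow> 'n cmat" where
  "kraus_map Ms \<rho> = sum_list (map (\<lambda>M. M ** \<rho> ** adj M) Ms)"

definition kraus_dual :: "'n::finite cmat list \<Rightarrow> 'n cmat \<Rightarrow> 'n cmat" where
  "kraus_dual Ms A = sum_list (map (\<lambda>M. adj M ** A ** M) Ms)"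

definition invariant :: "'n::finite cmat list \<Rightarrow> 'n cvec set \<Rightarrow> bool" where
  "invariant Ms S \<longleftrightarrow> (\<forall>\<rho>. psd \<rho> \<and> supp \<rho> \<subseteq> S \<longrightarrow> supp (kraus_map Ms \<rho>) \<subseteq> S)"

definition GAS :: "'n::finite cmat list \<Rightarrow> 'n cvec set \<Rightarrow> 'n cmat \<Rightarrow> bool" where
  "GAS Ms S P \<longleftrightarrow> invariant Ms S \<and>
     (\<forall>\<rho>. density \<rho> \<longrightarrow>
        (\<lambda>n. norm (((kraus_map Ms) ^^ n) \<rho> - P ** ((kraus_map Ms) ^^ n) \<rho> ** P)) \<longlonglongrightarrow> 0)"

text \<open>DID construction. did_SR Ms HS (i-1) = (S_i, R_i) for i \<ge> 1.
  R_{i+1} = \<Inter>_k ker(\<Pi>_{S_i} M_k |_{R_i}) = {x \<in> R_i. \<forall>k. M_k x \<perp> S_i}, and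
  S_{i+1} = S_i \<oplus> T_i with T_i the orthogonal complement of R_{i+1} in R_i.\<close>
definition next_R :: "'n::finite cmat list \<Rightarrow> 'n cvec set \<Rightarrow> 'n cvec set \<Rightarrow> 'n cvec set" where
  "next_R Ms S R = {x \<in> R. \<forall>M\<in>set Ms. M *v x \<in> orth_compl S}"

primrec did_SR :: "'n::finite cmat list \<Rightarrow> 'n cvec set \<Rightarrow> nat \<Rightarrow> 'n cvec set \<times> 'n cvec set" where
  "did_SR Ms HS 0 = (HS, orth_compl HS)"
| "did_SR Ms HS (Suc i) =
     (let S = fst (did_SR Ms HS i); R = snd (did_SR Ms HS i); R' = next_R Ms S R
      in (S \<oplus>\<^sub>s (R \<inter> orth_compl R'), R'))"

definition DID_S :: "'n::finite cmat list \<Rightarrow> 'n cvec set \<Rightarrow> nat \<Rightarrow> 'n cvec set" where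
  "DID_S Ms HS i = fst (did_SR Ms HS (i - 1))"

definition DID_R :: "'n::finite cmat list \<Rightarrow> 'n cvec set \<Rightarrow> nat \<Rightarrow> 'n cvec set" where
  "DID_R Ms HS i = snd (did_SR Ms HS (i - 1))"

definition DID_N :: "'n::finite cmat list \<Rightarrow> 'n cvec set \<Rightarrow> nat" where
  "DID_N Ms HS = (LEAST i. 1 \<le> i \<and>
      (DID_R Ms HS (Suc i) = DID_R Ms HS i \<or> DID_R Ms HS (Suc i) = {0}))"

definition DID_T :: "'n::finite cmat list \<Rightarrow> 'n cvec set \<Rightarrow> nat \<Rightarrow> 'n cvec set" where
  "DID_T Ms HS i = (if i = DID_N Ms HS then DID_R Ms HS i
                    else DID_R Ms HS i \<inter> orth_compl (DID_R Ms HS (Suc i)))"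

definition DID_sum :: "'n::finite cmat list \<Rightarrow> 'n cvec set \<Rightarrow> nat \<Rightarrow> 'n cvec set" where
  "DID_sum Ms HS n = {s + (\<Sum>i\<in>{1..n}. t i) | s t. s \<in> HS \<and> (\<forall>i\<in>{1..n}. t i \<in> DID_T Ms HS i)}"

end

theory Submission
  imports Defs
begin

(*
  Write K_j = ker (T*^j (Pi_S)) for the kernel of the j-th dual iterate of the projection.

  (1) Pi_S is positive and T* is a sum of congruences A |-> M^dag A M, so every T*^j(Pi_S)
      is positive and its kernel obeys the recursion  x \<in> K_(j+1) <-> (\<forall>k. M_k x \<in> K_j),
      with K_0 = H_S^perp.  Invariance of H_S and sum_k M_k^dag M_k = I make the chain
      decreasing, and K_(j+1) = {x. supp T(|x><x|) \<subseteq> K_j} depends on T only.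
  (2) The DID construction computes exactly this chain: R_i = K_(i-1), S_i = K_(i-1)^perp.
  (3) GAS forbids the chain to stall at a nonzero K_j (a state supported in such a K_j would
      stay orthogonal to H_S forever), while finite dimension forces it to stall.  Hence the
      final index N is the first index with K_N = {0}, and T_i = K_(i-1) \<inter> K_i^perp
      (for i = N because K_N^perp is everything).
  (4) Adding these relative complements one at a time gives
      H_S \<oplus> T_1 \<oplus> ... \<oplus> T_n = K_n^perp = supp (T*^n (Pi_S)), and all three claims follow.
*)

lemma cinner_add_right: "cinner x (y + z) = cinner x y + cinner x z"
  by (simp add: cinner_def distrib_left sum.distrib)

lemma cinner_add_left: "cinner (x + y) z = cinner x z + cinner y z"
  by (simp add: cinner_def distrib_right sum.distrib)

lemma cinner_zero_right [simp]: "cinner x 0 = 0"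
  by (simp add: cinner_def)

lemma cinner_zero_left [simp]: "cinner 0 x = 0"
  by (simp add: cinner_def)

lemma cinner_smult_right: "cinner x (c *s y) = c * cinner x y"
  by (simp add: cinner_def sum_distrib_left mult_ac)

lemma cinner_smult_left: "cinner (c *s x) y = cnj c * cinner x y"
  by (simp add: cinner_def sum_distrib_left mult_ac)

lemma cinner_commute: "cinner y x = cnj (cinner x y)"
  by (simp add: cinner_def mult.commute)

lemma cinner_zero_sym: "cinner x y = 0 \<longleftrightarrow> cinner y x = 0"
  using cinner_commute[of y x] by simp

lemma cinner_self_norm: "cinner x x = complex_of_real ((norm x)\<^sup>2)"
proof -
  have "cnj z * z = complex_of_real ((cmod z)\<^sup>2)" for z :: complex
    by (metis complex_norm_square mult.commute of_real_power)
  moreover have "(norm x)\<^sup>2 = (\<Sum>i\<in>UNIV. (cmod (x $ i))\<^sup>2)"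
    by (simp add: norm_vec_def L2_set_def sum_nonneg)
  ultimately show ?thesis by (simp add: cinner_def)
qed

lemma cinner_self_eq_0: "cinner x x = 0 \<longleftrightarrow> x = 0"
  by (simp add: cinner_self_norm)

lemma adj_cinner: "cinner x (adj A *v y) = cinner (A *v x) y"
  by (simp add: cinner_def adj_def matrix_vector_mult_def sum_distrib_left
      sum_distrib_right mult_ac) (rule sum.swap)

lemma mv_smult: "(A::'n::finite cmat) *v (c *s x) = c *s (A *v x)"
  unfolding matrix_vector_mult_def vec_eq_iff
  by (auto simp: sum_distrib_left mult.left_commute intro!: sum.cong)

lemma mv_sum_list: "sum_list (map f xs) *v x = sum_list (map (\<lambda>M. f M *v x) xs)"
  by (induction xs) (simp_all add: matrix_vector_mult_add_rdistrib)

lemma cinner_sum_list_right: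
  "cinner x (sum_list (map f xs)) = sum_list (map (\<lambda>M. cinner x (f M)) xs)"
  by (induction xs) (simp_all add: cinner_add_right)

lemma sum_list_nonneg_complex:
  assumes "\<And>M. M \<in> set xs \<Longrightarrow> Im (f M) = 0 \<and> Re (f M) \<ge> 0"
  shows "Im (sum_list (map f xs)) = 0 \<and> Re (sum_list (map f xs)) \<ge> 0"
  using assms by (induction xs) auto

lemma sum_list_nonneg_complex_eq_0:
  assumes "\<And>M. M \<in> set xs \<Longrightarrow> Im (f M) = 0 \<and> Re (f M) \<ge> 0"
    and "sum_list (map f xs) = 0"
  shows "\<forall>M\<in>set xs. f M = 0"
proof -
  have "Re (sum_list (map f xs)) = sum_list (map (\<lambda>M. Re (f M)) xs)"
    by (induction xs) simp_all
  with assms(2) have "sum_list (map (\<lambda>M. Re (f M)) xs) = 0" by simp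
  then have "\<forall>y\<in>set (map (\<lambda>M. Re (f M)) xs). y = 0"
    using sum_list_nonneg_eq_0_iff[of "map (\<lambda>M. Re (f M)) xs"] assms(1) by auto
  then show ?thesis using assms(1) by (auto simp: complex_eq_iff)
qed

section \<open>Subspaces and orthogonal complements\<close>

lemma csubspace_orth_compl: "csubspace (orth_compl S)"
  by (simp add: csubspace_def orth_compl_def cinner_add_right cinner_smult_right)

lemma csubspace_ker: "csubspace (ker A)"
  by (simp add: csubspace_def ker_def matrix_vector_right_distrib mv_smult)

lemma csubspace_UNIV: "csubspace UNIV"
  by (simp add: csubspace_def)

lemma csubspace_sum_list:
  "csubspace S \<Longrightarrow> (\<And>x. x \<in> set xs \<Longrightarrow> f x \<in> S) \<Longrightarrow> sum_list (map f xs) \<in> S"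
  by (induction xs) (auto simp: csubspace_def)

lemma csubspace_diff: "csubspace S \<Longrightarrow> x \<in> S \<Longrightarrow> y \<in> S \<Longrightarrow> x - y \<in> S"
  unfolding csubspace_def
  by (metis (no_types, lifting) diff_conv_add_uminus vector_smult_lid vector_smult_lneg)

lemma scaleR_as_smult: "r *\<^sub>R (x::'n::finite cvec) = complex_of_real r *s x"
proof -
  have "\<forall>i. r *\<^sub>R (x $ i) = complex_of_real r * x $ i" by (simp add: scaleR_conv_of_real)
  then show ?thesis by (simp add: vec_eq_iff)
qed

text \<open>A complex subspace is in particular a real subspace, so the real linear algebra
  of HOL-Analysis (orthogonal decomposition, dimension) applies.\<close>
lemma csubspace_subspace: "csubspace S \<Longrightarrow> subspace S"
  by (simp add: csubspace_def subspace_def scaleR_as_smult)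

lemma orth_compl_antimono: "A \<subseteq> B \<Longrightarrow> orth_compl B \<subseteq> orth_compl A"
  by (auto simp: orth_compl_def)

lemma orth_compl_zero: "orth_compl {0} = UNIV"
  by (simp add: orth_compl_def)

text \<open>Orthogonal decomposition \<open>x = p + q\<close> with \<open>p \<in> U\<close>, \<open>q \<perp> U\<close>; obtained from the real
  decomposition, since real orthogonality to \<open>w\<close> and to \<open>\<i>w\<close> is complex orthogonality.\<close>
lemma orth_decomp:
  assumes "csubspace U"
  obtains p q where "p \<in> U" "q \<in> orth_compl U" "x = p + q"
proof -
  have sp: "span U = U" using csubspace_subspace[OF assms] by simp
  obtain y z where y: "y \<in> span U" and z: "\<And>w. w \<in> span U \<Longrightarrow> orthogonal z w"
    and xe: "x = y + z"
    using orthogonal_subspace_decomp_exists by blast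
  have Re_cinner: "Re (cinner w z) = inner w z" for w
    by (simp add: cinner_def inner_vec_def inner_complex_def)
  have "cinner w z = 0" if w: "w \<in> U" for w
  proof -
    have "\<i> *s w \<in> U" using w assms by (simp add: csubspace_def)
    then have "Re (cinner (\<i> *s w) z) = 0" using z[of "\<i> *s w"] sp
      by (simp add: Re_cinner orthogonal_def inner_commute)
    moreover have "Re (cinner w z) = 0" using z[of w] sp w
      by (simp add: Re_cinner orthogonal_def inner_commute)
    ultimately show ?thesis by (simp add: cinner_smult_left complex_eq_iff)
  qed
  then have "z \<in> orth_compl U" by (simp add: orth_compl_def)
  then show ?thesis using that y sp xe by auto
qed

lemma relative_orth_compl_orth_compl:
  assumes W: "csubspace W" and U: "csubspace U" and WU: "W \<subseteq> U"
  shows "U \<inter> orth_compl (U \<inter> orth_compl W) = W"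
proof
  show "W \<subseteq> U \<inter> orth_compl (U \<inter> orth_compl W)"
    using WU by (auto simp: orth_compl_def) (simp add: cinner_zero_sym)
  show "U \<inter> orth_compl (U \<inter> orth_compl W) \<subseteq> W"
  proof
    fix x assume x: "x \<in> U \<inter> orth_compl (U \<inter> orth_compl W)"
    obtain p q where p: "p \<in> W" and q: "q \<in> orth_compl W" and xe: "x = p + q"
      using orth_decomp[OF W] by blast
    have "q = x - p" using xe by simp
    then have "q \<in> U" using x p WU csubspace_diff[OF U] by blast
    then have "cinner q x = 0" using x q by (simp add: orth_compl_def)
    moreover have "cinner q p = 0" using q p
      by (simp add: orth_compl_def) (simp add: cinner_zero_sym)
    ultimately have "cinner q q = 0" using xe by (simp add: cinner_add_right)
    then show "x \<in> W" using xe p by (simp add: cinner_self_eq_0)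
  qed
qed

lemma orth_compl_orth_compl: "csubspace S \<Longrightarrow> orth_compl (orth_compl S) = S"
  using relative_orth_compl_orth_compl[OF _ csubspace_UNIV, of S] by simp

lemma orth_compl_ssum:
  assumes "0 \<in> A" "0 \<in> B"
  shows "orth_compl (A \<oplus>\<^sub>s B) = orth_compl A \<inter> orth_compl B"
proof
  have "A \<subseteq> A \<oplus>\<^sub>s B" "B \<subseteq> A \<oplus>\<^sub>s B" using assms by (force simp: ssum_def)+
  then show "orth_compl (A \<oplus>\<^sub>s B) \<subseteq> orth_compl A \<inter> orth_compl B"
    using orth_compl_antimono by blast
  show "orth_compl A \<inter> orth_compl B \<subseteq> orth_compl (A \<oplus>\<^sub>s B)"
    by (auto simp: orth_compl_def ssum_def cinner_add_left)
qed

text \<open>For \<open>W \<subseteq> U\<close>: \<open>W\<^sup>\<perp> = U\<^sup>\<perp> \<oplus> (U \<ominus> W)\<close>; this is how one more DID block is added.\<close>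
lemma orth_compl_split:
  assumes W: "csubspace W" and U: "csubspace U" and WU: "W \<subseteq> U"
  shows "orth_compl W = orth_compl U \<oplus>\<^sub>s (U \<inter> orth_compl W)"
proof
  show "orth_compl U \<oplus>\<^sub>s (U \<inter> orth_compl W) \<subseteq> orth_compl W"
    using orth_compl_antimono[OF WU] csubspace_orth_compl[of W]
    by (auto simp: ssum_def csubspace_def)
  show "orth_compl W \<subseteq> orth_compl U \<oplus>\<^sub>s (U \<inter> orth_compl W)"
  proof
    fix x assume x: "x \<in> orth_compl W"
    obtain p q where p: "p \<in> U" and q: "q \<in> orth_compl U" and xe: "x = q + p"
      using orth_decomp[OF U, of x] by (metis add.commute)
    have "q \<in> orth_compl W" using q orth_compl_antimono[OF WU] by blast
    then have "p \<in> orth_compl W"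
      using csubspace_diff[OF csubspace_orth_compl x] xe by (metis add_diff_cancel_left')
    then show "x \<in> orth_compl U \<oplus>\<^sub>s (U \<inter> orth_compl W)"
      using p q xe unfolding ssum_def by blast
  qed
qed

lemma unit_vector_in_subspace:
  assumes "csubspace K" "K \<noteq> {0}"
  obtains u where "u \<in> K" "cinner u u = 1"
proof -
  obtain v where v: "v \<in> K" "v \<noteq> 0"
    using assms by (auto simp: csubspace_def)
  define u where "u = complex_of_real (1 / norm v) *s v"
  have "u \<in> K" using assms(1) v by (simp add: u_def csubspace_def)
  moreover have "cinner u u = 1"
  proof -
    have "cinner u u = complex_of_real ((1 / norm v) * (1 / norm v) * (norm v)\<^sup>2)"
      unfolding u_def cinner_smult_left cinner_smult_right cinner_self_norm[of v] by simp
    also have "\<dots> = 1" using v by (simp add: power2_eq_square)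
    finally show ?thesis .
  qed
  ultimately show ?thesis by (rule that)
qed

lemma decreasing_csubspace_chain_stalls:
  fixes K :: "nat \<Rightarrow> 'n::finite cvec set"
  assumes "\<And>j. csubspace (K j)" and "\<And>j. K (Suc j) \<subseteq> K j"
  shows "\<exists>j. K (Suc j) = K j"
proof (rule ccontr)
  assume "\<not> ?thesis"
  then have "K (Suc j) \<subset> K j" for j using assms(2) by blast
  moreover have "span (K j) = K j" for j
    using csubspace_subspace[OF assms(1)] by simp
  ultimately have lt: "dim (K (Suc j)) < dim (K j)" for j
    by (metis dim_psubset)
  have "dim (K j) + j \<le> dim (K 0)" for j
  proof (induction j)
    case (Suc j)
    then show ?case using lt[of j] by simp
  qed simp
  from this[of "Suc (dim (K 0))"] show False by simp
qed

section \<open>Positive operators and the dual map\<close>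

text \<open>Positivity in the strong form used here: the quadratic form is real and nonnegative,
  and it vanishes only on the kernel.  This is what passes through the dual map.\<close>
definition nonneg :: "'n::finite cmat \<Rightarrow> bool" where
  "nonneg A \<longleftrightarrow> (\<forall>x. Im (cinner x (A *v x)) = 0 \<and> Re (cinner x (A *v x)) \<ge> 0 \<and>
      (cinner x (A *v x) = 0 \<longrightarrow> A *v x = 0))"

lemma kraus_dual_mv:
  "kraus_dual Ms A *v x = sum_list (map (\<lambda>M. adj M *v (A *v (M *v x))) Ms)"
  by (simp add: kraus_dual_def mv_sum_list matrix_vector_mul_assoc matrix_mul_assoc)

lemma kraus_dual_quad:
  "cinner x (kraus_dual Ms A *v x) = sum_list (map (\<lambda>M. cinner (M *v x) (A *v (M *v x))) Ms)"
  by (simp add: kraus_dual_mv cinner_sum_list_right adj_cinner)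

lemma nonneg_kraus_dual:
  assumes "nonneg A"
  shows "nonneg (kraus_dual Ms A)"
    and "ker (kraus_dual Ms A) = {x. \<forall>M\<in>set Ms. M *v x \<in> ker A}"
proof -
  have pos: "Im (cinner (M *v x) (A *v (M *v x))) = 0 \<and> Re (cinner (M *v x) (A *v (M *v x))) \<ge> 0"
    for x M using assms by (simp add: nonneg_def)
  have to_ker: "\<forall>M\<in>set Ms. M *v x \<in> ker A" if "cinner x (kraus_dual Ms A *v x) = 0" for x
  proof -
    have "\<forall>M\<in>set Ms. cinner (M *v x) (A *v (M *v x)) = 0"
      using sum_list_nonneg_complex_eq_0[OF pos] that by (simp add: kraus_dual_quad)
    then show ?thesis using assms by (simp add: nonneg_def ker_def)
  qed
  have from_ker: "kraus_dual Ms A *v x = 0" if "\<forall>M\<in>set Ms. M *v x \<in> ker A" for x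
  proof -
    have "sum_list (map (\<lambda>M. adj M *v (A *v (M *v x))) Ms) = sum_list (map (\<lambda>M. 0) Ms)"
      using that by (intro arg_cong[where f=sum_list] map_cong) (auto simp: ker_def)
    then show ?thesis by (simp add: kraus_dual_mv)
  qed
  have "Im (cinner x (kraus_dual Ms A *v x)) = 0 \<and> Re (cinner x (kraus_dual Ms A *v x)) \<ge> 0" for x
    unfolding kraus_dual_quad
    using sum_list_nonneg_complex[of Ms "\<lambda>M. cinner (M *v x) (A *v (M *v x))"] pos by blast
  then show "nonneg (kraus_dual Ms A)"
    unfolding nonneg_def using to_ker from_ker by blast
  show "ker (kraus_dual Ms A) = {x. \<forall>M\<in>set Ms. M *v x \<in> ker A}"
    using to_ker from_ker by (auto simp: ker_def)
qed

lemma orth_proj_facts: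
  assumes "is_orth_proj PS HS"
  shows "nonneg PS" and "ker PS = orth_compl HS"
proof -
  have a: "adj PS = PS" and b: "PS ** PS = PS" and r: "range (\<lambda>x. PS *v x) = HS"
    using assms by (auto simp: is_orth_proj_def)
  have q: "cinner x (PS *v x) = cinner (PS *v x) (PS *v x)" for x
    using adj_cinner[of x PS "PS *v x"] a b by (simp add: matrix_vector_mul_assoc)
  show "nonneg PS" unfolding nonneg_def q by (simp add: cinner_self_norm cinner_self_eq_0)
  show "ker PS = orth_compl HS"
  proof
    show "ker PS \<subseteq> orth_compl HS"
    proof
      fix x assume x: "x \<in> ker PS"
      have "cinner (PS *v w) x = 0" for w
        using adj_cinner[of w PS x] a x by (simp add: ker_def)
      then show "x \<in> orth_compl HS" using r by (auto simp: orth_compl_def)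
    qed
    show "orth_compl HS \<subseteq> ker PS"
    proof
      fix x assume "x \<in> orth_compl HS"
      moreover have "PS *v x \<in> HS" using r by auto
      ultimately have "cinner x (PS *v x) = 0"
        using cinner_zero_sym by (auto simp: orth_compl_def)
      then show "x \<in> ker PS" by (simp add: q cinner_self_eq_0 ker_def)
    qed
  qed
qed

definition dual_ker :: "'n::finite cmat list \<Rightarrow> 'n cmat \<Rightarrow> nat \<Rightarrow> 'n cvec set" where
  "dual_ker Ms PS j = ker ((kraus_dual Ms ^^ j) PS)"

lemma csubspace_dual_ker: "csubspace (dual_ker Ms PS j)"
  by (simp add: dual_ker_def csubspace_ker)

lemma dual_ker_0: "is_orth_proj PS HS \<Longrightarrow> dual_ker Ms PS 0 = orth_compl HS"
  by (simp add: dual_ker_def orth_proj_facts)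

lemma dual_ker_Suc:
  assumes "is_orth_proj PS HS"
  shows "dual_ker Ms PS (Suc j) = {x. \<forall>M\<in>set Ms. M *v x \<in> dual_ker Ms PS j}"
proof -
  have "nonneg ((kraus_dual Ms ^^ j) PS)"
    by (induction j) (simp_all add: orth_proj_facts[OF assms] nonneg_kraus_dual)
  then show ?thesis by (simp add: dual_ker_def nonneg_kraus_dual)
qed

section \<open>Rank-one operators\<close>

definition ketbra :: "'n::finite cvec \<Rightarrow> 'n cmat" where
  "ketbra v = (\<chi> i j. v $ i * cnj (v $ j))"

lemma ketbra_mv: "ketbra v *v y = cinner v y *s v"
  unfolding ketbra_def matrix_vector_mult_def cinner_def vec_eq_iff
  by (auto simp: sum_distrib_right intro!: sum.cong)

lemma psd_ketbra: "psd (ketbra x)"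
proof -
  have "cinner y (ketbra x *v y) = cinner x y * cnj (cinner x y)" for y
    using cinner_commute[of y x] by (simp add: ketbra_mv cinner_smult_right)
  then show ?thesis by (simp add: psd_def complex_mult_cnj)
qed

lemma trace_ketbra: "trace (ketbra u) = cinner u u"
  by (simp add: trace_def cinner_def ketbra_def mult.commute)

lemma kraus_map_ketbra: "kraus_map Ms (ketbra x) = sum_list (map (\<lambda>M. ketbra (M *v x)) Ms)"
proof -
  have "M ** ketbra x ** adj M = ketbra (M *v x)" for M
    unfolding matrix_eq
    by (simp add: matrix_vector_mul_assoc[symmetric] ketbra_mv mv_smult adj_cinner)
  then show ?thesis by (simp add: kraus_map_def)
qed

lemma in_supp_ketbras:
  assumes "M \<in> set xs"
  shows "f M \<in> supp (sum_list (map (\<lambda>M. ketbra (f M)) xs))"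
proof -
  have nonneg: "Im (z * cnj z) = 0 \<and> Re (z * cnj z) \<ge> 0" for z :: complex
    by (simp add: complex_mult_cnj)
  have "cinner (f M) y = 0" if y: "y \<in> ker (sum_list (map (\<lambda>M. ketbra (f M)) xs))" for y
  proof -
    have "sum_list (map (\<lambda>M. cinner (f M) y * cnj (cinner (f M) y)) xs)
        = cinner y (sum_list (map (\<lambda>M. ketbra (f M)) xs) *v y)"
      by (simp add: mv_sum_list cinner_sum_list_right ketbra_mv cinner_smult_right)
         (intro arg_cong[where f=sum_list] map_cong refl arg_cong[where f="(*) _"]
           cinner_commute[symmetric])
    also have "\<dots> = 0" using y by (simp add: ker_def)
    finally have "cinner (f M) y * cnj (cinner (f M) y) = 0"
      using sum_list_nonneg_complex_eq_0[of xs "\<lambda>M. cinner (f M) y * cnj (cinner (f M) y)"]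
        nonneg assms by blast
    then show ?thesis by simp
  qed
  then show ?thesis by (auto simp: supp_def orth_compl_def cinner_zero_sym)
qed

lemma supp_ketbras_subset:
  assumes "csubspace K" "\<And>M. M \<in> set xs \<Longrightarrow> f M \<in> K"
  shows "supp (sum_list (map (\<lambda>M. ketbra (f M)) xs)) \<subseteq> K"
proof -
  have "orth_compl K \<subseteq> ker (sum_list (map (\<lambda>M. ketbra (f M)) xs))"
  proof
    fix y assume y: "y \<in> orth_compl K"
    have "sum_list (map (\<lambda>M. ketbra (f M) *v y) xs) = sum_list (map (\<lambda>M. 0) xs)"
      using y assms(2)
      by (intro arg_cong[where f=sum_list] map_cong) (auto simp: ketbra_mv orth_compl_def)
    then show "y \<in> ker (sum_list (map (\<lambda>M. ketbra (f M)) xs))"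
      by (simp add: ker_def mv_sum_list)
  qed
  then have "supp (sum_list (map (\<lambda>M. ketbra (f M)) xs)) \<subseteq> orth_compl (orth_compl K)"
    unfolding supp_def by (rule orth_compl_antimono)
  then show ?thesis using orth_compl_orth_compl[OF assms(1)] by simp
qed

lemma supp_kraus_map_ketbra_subset:
  "csubspace K \<Longrightarrow> supp (kraus_map Ms (ketbra x)) \<subseteq> K \<longleftrightarrow> (\<forall>M\<in>set Ms. M *v x \<in> K)"
  unfolding kraus_map_ketbra
  using supp_ketbras_subset[of K Ms "\<lambda>M. M *v x"] in_supp_ketbras[of _ Ms "\<lambda>M. M *v x"] by blast

lemma invariant_kraus_op:
  assumes "invariant Ms HS" "csubspace HS" "s \<in> HS" "M \<in> set Ms"
  shows "M *v s \<in> HS"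
proof -
  have "supp (ketbra s) \<subseteq> HS"
    using supp_ketbras_subset[OF assms(2), of "[s]" "\<lambda>v. v"] assms(3) by simp
  then have "supp (kraus_map Ms (ketbra s)) \<subseteq> HS"
    using assms(1) psd_ketbra by (auto simp: invariant_def)
  then show ?thesis using supp_kraus_map_ketbra_subset[OF assms(2)] assms(4) by blast
qed

text \<open>\<open>K\<^sub>(\<^sub>j\<^sub>+\<^sub>1\<^sub>) = {x. supp T(|x\<rangle>\<langle>x|) \<subseteq> K\<^sub>j}\<close>, so the chain is determined by the channel alone.\<close>
lemma dual_ker_independent:
  assumes "is_orth_proj PS HS" and "kraus_map Ms' = kraus_map Ms"
  shows "dual_ker Ms' PS j = dual_ker Ms PS j"
proof (induction j)
  case 0 show ?case using dual_ker_0[OF assms(1)] by simp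
next
  case (Suc j)
  have "dual_ker L PS (Suc j) = {x. supp (kraus_map L (ketbra x)) \<subseteq> dual_ker L PS j}" for L
    by (simp add: dual_ker_Suc[OF assms(1)] supp_kraus_map_ketbra_subset[OF csubspace_dual_ker])
  then show ?case using Suc assms(2) by simp
qed

lemma trace_sum_list: "trace (sum_list (map f xs) :: 'n::finite cmat) = sum_list (map (\<lambda>M. trace (f M)) xs)"
  by (induction xs) (simp_all add: trace_add trace_0[simplified])

lemma trace_kraus_map:
  assumes "kraus_family Ms"
  shows "trace (kraus_map Ms \<sigma>) = trace \<sigma>"
proof -
  have mult_left: "sum_list (map (\<lambda>M. \<sigma> ** f M) Ms) = \<sigma> ** sum_list (map f Ms)" for f
    by (induction Ms) (simp_all add: matrix_add_ldistrib)
  have "trace (M ** \<sigma> ** adj M) = trace (\<sigma> ** (adj M ** M))" for M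
  proof -
    have "trace (M ** \<sigma> ** adj M) = trace (adj M ** (M ** \<sigma>))" by (rule trace_mul_sym)
    also have "\<dots> = trace ((adj M ** M) ** \<sigma>)" by (simp add: matrix_mul_assoc)
    also have "\<dots> = trace (\<sigma> ** (adj M ** M))" by (rule trace_mul_sym)
    finally show ?thesis .
  qed
  then have "trace (kraus_map Ms \<sigma>) = trace (sum_list (map (\<lambda>M. \<sigma> ** (adj M ** M)) Ms))"
    by (simp add: kraus_map_def trace_sum_list)
  also have "\<dots> = trace \<sigma>"
    using assms by (simp add: mult_left kraus_family_def)
  finally show ?thesis .
qed

lemma tendsto_trace_zero:
  fixes f :: "nat \<Rightarrow> 'n::finite cmat"
  assumes "f \<longlonglongrightarrow> 0"
  shows "(\<lambda>n. trace (f n)) \<longlonglongrightarrow> 0"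
proof -
  have "(\<lambda>n. f n $ i $ i) \<longlonglongrightarrow> 0 $ i $ i" for i
    by (intro tendsto_vec_nth assms)
  then have "(\<lambda>n. f n $ i $ i) \<longlonglongrightarrow> 0" for i
    by (simp only: zero_index)
  then show ?thesis unfolding trace_def by (rule tendsto_null_sum)
qed

lemma kraus_map_preserves_range:
  assumes K: "csubspace K" and MK: "\<And>M x. M \<in> set Ms \<Longrightarrow> x \<in> K \<Longrightarrow> M *v x \<in> K"
    and \<sigma>: "\<And>y. \<sigma> *v y \<in> K"
  shows "kraus_map Ms \<sigma> *v y \<in> K"
proof -
  have "kraus_map Ms \<sigma> *v y = sum_list (map (\<lambda>M. M *v (\<sigma> *v (adj M *v y))) Ms)"
    by (simp add: kraus_map_def mv_sum_list matrix_vector_mul_assoc matrix_mul_assoc)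
  also have "\<dots> \<in> K" using MK \<sigma> by (auto intro: csubspace_sum_list[OF K])
  finally show ?thesis .
qed

section \<open>The kernel chain of an invariant subspace\<close>

locale invariant_setting =
  fixes Ms :: "'n::finite cmat list" and HS :: "'n cvec set" and PS :: "'n cmat"
  assumes kraus: "kraus_family Ms" and subspace: "csubspace HS"
    and orth_proj: "is_orth_proj PS HS" and inv: "invariant Ms HS"
begin

text \<open>Invariance and \<open>\<Sum> M\<^sup>\<dagger>M = I\<close> make the chain decreasing.\<close>
lemma dual_ker_Suc_subset: "dual_ker Ms PS (Suc j) \<subseteq> dual_ker Ms PS j"
proof (induction j)
  case 0
  show ?case
  proof
    fix x assume "x \<in> dual_ker Ms PS (Suc 0)"
    then have x: "\<forall>M\<in>set Ms. M *v x \<in> orth_compl HS"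
      by (simp add: dual_ker_Suc[OF orth_proj] dual_ker_0[OF orth_proj])
    have "cinner s x = 0" if s: "s \<in> HS" for s
    proof -
      have "cinner s x = cinner s (sum_list (map (\<lambda>M. adj M ** M) Ms) *v x)"
        using kraus by (simp add: kraus_family_def)
      also have "\<dots> = sum_list (map (\<lambda>M. cinner (M *v s) (M *v x)) Ms)"
        by (simp add: mv_sum_list cinner_sum_list_right matrix_vector_mul_assoc[symmetric] adj_cinner)
      also have "\<dots> = sum_list (map (\<lambda>M. 0) Ms)"
        using x invariant_kraus_op[OF inv subspace s]
        by (intro arg_cong[where f=sum_list] map_cong) (auto simp: orth_compl_def)
      finally show ?thesis by simp
    qed
    then show "x \<in> dual_ker Ms PS 0" by (simp add: dual_ker_0[OF orth_proj] orth_compl_def)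
  qed
next
  case (Suc j)
  then show ?case by (auto simp: dual_ker_Suc[OF orth_proj])
qed

lemma dual_ker_antimono: "i \<le> j \<Longrightarrow> dual_ker Ms PS j \<subseteq> dual_ker Ms PS i"
  by (induction j rule: dec_induct) (use dual_ker_Suc_subset in blast)+

lemma did_SR_dual_ker:
  "snd (did_SR Ms HS j) = dual_ker Ms PS j \<and> orth_compl (fst (did_SR Ms HS j)) = dual_ker Ms PS j
   \<and> 0 \<in> fst (did_SR Ms HS j)"
proof (induction j)
  case 0
  show ?case using subspace dual_ker_0[OF orth_proj] by (simp add: csubspace_def)
next
  case (Suc j)
  define S where "S = fst (did_SR Ms HS j)"
  define R where "R = snd (did_SR Ms HS j)"
  define R' where "R' = next_R Ms S R"
  have R: "R = dual_ker Ms PS j" and S: "orth_compl S = dual_ker Ms PS j" and S0: "0 \<in> S"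
    using Suc by (auto simp: S_def R_def)
  have R': "R' = dual_ker Ms PS (Suc j)"
    using dual_ker_Suc_subset[of j]
    by (auto simp: R'_def next_R_def R S dual_ker_Suc[OF orth_proj])
  have T0: "0 \<in> R \<inter> orth_compl R'"
    using csubspace_dual_ker[of Ms PS j] csubspace_orth_compl[of R'] R by (simp add: csubspace_def)
  have "orth_compl (S \<oplus>\<^sub>s (R \<inter> orth_compl R')) = orth_compl S \<inter> orth_compl (R \<inter> orth_compl R')"
    by (rule orth_compl_ssum[OF S0 T0])
  also have "\<dots> = dual_ker Ms PS (Suc j)"
    unfolding S R R'
    by (rule relative_orth_compl_orth_compl[OF csubspace_dual_ker csubspace_dual_ker
          dual_ker_Suc_subset])
  finally have "orth_compl (S \<oplus>\<^sub>s (R \<inter> orth_compl R')) = dual_ker Ms PS (Suc j)" .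
  moreover have "0 \<in> S \<oplus>\<^sub>s (R \<inter> orth_compl R')"
    using S0 T0 unfolding ssum_def by force
  moreover have "did_SR Ms HS (Suc j) = (S \<oplus>\<^sub>s (R \<inter> orth_compl R'), R')"
    by (simp add: S_def R_def R'_def Let_def)
  ultimately show ?case using R' by simp
qed

lemma DID_R_dual_ker: "DID_R Ms HS i = dual_ker Ms PS (i - 1)"
  using did_SR_dual_ker by (simp add: DID_R_def)

end

section \<open>The kernel chain of a GAS subspace\<close>

locale GAS_setting =
  fixes Ms :: "'n::finite cmat list" and HS :: "'n cvec set" and PS :: "'n cmat"
  assumes kraus: "kraus_family Ms" and subspace: "csubspace HS"
    and orth_proj: "is_orth_proj PS HS" and gas: "GAS Ms HS PS"
begin

sublocale invariant_setting Ms HS PS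
proof
  show "kraus_family Ms" by (fact kraus)
  show "csubspace HS" by (fact subspace)
  show "is_orth_proj PS HS" by (fact orth_proj)
  show "invariant Ms HS" using gas unfolding GAS_def by (rule conjunct1)
qed

text \<open>GAS forbids a nonzero stall: if \<open>K\<^sub>j\<^sub>+\<^sub>1 = K\<^sub>j \<noteq> {0}\<close>, every Kraus operator maps \<open>K\<^sub>j\<close> into
  itself, so a pure state in \<open>K\<^sub>j \<subseteq> H\<^sub>S\<^sup>\<perp>\<close> evolves within \<open>K\<^sub>j\<close>; then \<open>\<Pi>\<^sub>S T\<^sup>n(\<rho>) = 0\<close>, and GAS
  would force \<open>T\<^sup>n(\<rho>) \<rightarrow> 0\<close>, contradicting trace preservation.\<close>
lemma no_nonzero_stall:
  assumes stall: "dual_ker Ms PS (Suc j) = dual_ker Ms PS j"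
  shows "dual_ker Ms PS j = {0}"
proof (rule ccontr)
  let ?K = "dual_ker Ms PS j"
  assume "?K \<noteq> {0}"
  then obtain u where uK: "u \<in> ?K" and u1: "cinner u u = 1"
    using unit_vector_in_subspace[OF csubspace_dual_ker] by blast
  define \<rho> where "\<rho> = ketbra u"
  have dens: "density \<rho>" by (simp add: density_def \<rho>_def psd_ketbra trace_ketbra u1)
  have MK: "M *v x \<in> ?K" if "M \<in> set Ms" "x \<in> ?K" for M x
    using that stall dual_ker_Suc[OF orth_proj, of Ms j] by auto
  have range: "(kraus_map Ms ^^ n) \<rho> *v y \<in> ?K" for n y
  proof (induction n arbitrary: y)
    case 0
    show ?case using uK csubspace_dual_ker[of Ms PS j] by (simp add: \<rho>_def ketbra_mv csubspace_def)
  next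
    case (Suc n)
    show ?case using kraus_map_preserves_range[OF csubspace_dual_ker MK Suc] by simp
  qed
  have "?K \<subseteq> ker PS"
    using dual_ker_antimono[of 0 j] by (simp add: dual_ker_def)
  then have "(PS ** (kraus_map Ms ^^ n) \<rho>) *v y = 0 *v y" for n y
    using range[of n y] by (simp add: ker_def subset_iff matrix_vector_mul_assoc[symmetric])
  then have "PS ** (kraus_map Ms ^^ n) \<rho> = 0" for n
    unfolding matrix_eq by blast
  moreover have "(\<lambda>n. norm ((kraus_map Ms ^^ n) \<rho> - PS ** (kraus_map Ms ^^ n) \<rho> ** PS)) \<longlonglongrightarrow> 0"
    using gas dens by (simp add: GAS_def)
  ultimately have "(\<lambda>n. (kraus_map Ms ^^ n) \<rho>) \<longlonglongrightarrow> 0"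
    by (simp add: tendsto_norm_zero_iff)
  then have "(\<lambda>n. trace ((kraus_map Ms ^^ n) \<rho>)) \<longlonglongrightarrow> 0" by (rule tendsto_trace_zero)
  moreover have "trace ((kraus_map Ms ^^ n) \<rho>) = 1" for n
    using dens by (induction n) (simp_all add: density_def trace_kraus_map[OF kraus])
  ultimately have "(\<lambda>n. 1 :: complex) \<longlonglongrightarrow> 0" by simp
  then show False by (simp add: LIMSEQ_const_iff)
qed

lemma DID_N_char: "DID_N Ms HS = (LEAST i. 1 \<le> i \<and> dual_ker Ms PS i = {0})"
proof -
  have "(1 \<le> i \<and> (DID_R Ms HS (Suc i) = DID_R Ms HS i \<or> DID_R Ms HS (Suc i) = {0}))
      \<longleftrightarrow> (1 \<le> i \<and> dual_ker Ms PS i = {0})" for i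
    using no_nonzero_stall[of "i - 1"] by (cases i) (auto simp: DID_R_dual_ker)
  then show ?thesis unfolding DID_N_def by (simp only:)
qed

lemma DID_N_props:
  "1 \<le> DID_N Ms HS" "dual_ker Ms PS (DID_N Ms HS) = {0}"
proof -
  obtain j where "dual_ker Ms PS (Suc j) = dual_ker Ms PS j"
    using decreasing_csubspace_chain_stalls[of "dual_ker Ms PS"] csubspace_dual_ker
      dual_ker_Suc_subset by blast
  then have "1 \<le> Suc j \<and> dual_ker Ms PS (Suc j) = {0}"
    using no_nonzero_stall by simp
  from LeastI[of "\<lambda>i. 1 \<le> i \<and> dual_ker Ms PS i = {0}", OF this]
  show "1 \<le> DID_N Ms HS" "dual_ker Ms PS (DID_N Ms HS) = {0}"
    unfolding DID_N_char by simp_all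
qed

lemma dual_ker_beyond_N:
  assumes "DID_N Ms HS \<le> n"
  shows "dual_ker Ms PS n = {0}"
proof -
  have "dual_ker Ms PS n \<subseteq> {0}"
    using dual_ker_antimono[OF assms] DID_N_props(2) by simp
  moreover have "0 \<in> dual_ker Ms PS n"
    using csubspace_dual_ker[of Ms PS n] by (simp add: csubspace_def)
  ultimately show ?thesis by blast
qed

text \<open>Uniform description of the DID blocks: \<open>T\<^sub>i = K\<^sub>i\<^sub>-\<^sub>1 \<ominus> K\<^sub>i\<close>; at the final index
  \<open>i = N\<close>, where the construction takes all of \<open>R\<^sub>N\<close>, this holds because \<open>K\<^sub>N = {0}\<close>.\<close>
lemma DID_T_dual_ker:
  "DID_T Ms HS i = dual_ker Ms PS (i - 1) \<inter> orth_compl (dual_ker Ms PS i)"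
proof (cases "i = DID_N Ms HS")
  case True
  then have "dual_ker Ms PS i = {0}" using DID_N_props(2) by simp
  then show ?thesis using True by (simp add: DID_T_def DID_R_dual_ker orth_compl_zero)
next
  case False
  then show ?thesis by (simp add: DID_T_def DID_R_dual_ker)
qed

end

section \<open>The DID direct sums\<close>

lemma DID_sum_0: "DID_sum Ms HS 0 = HS"
  by (auto simp: DID_sum_def)

lemma DID_sum_Suc: "DID_sum Ms HS (Suc m) = DID_sum Ms HS m \<oplus>\<^sub>s DID_T Ms HS (Suc m)"
proof
  show "DID_sum Ms HS (Suc m) \<subseteq> DID_sum Ms HS m \<oplus>\<^sub>s DID_T Ms HS (Suc m)"
  proof
    fix x assume "x \<in> DID_sum Ms HS (Suc m)"
    then obtain s t where s: "s \<in> HS" and t: "\<forall>i\<in>{1..Suc m}. t i \<in> DID_T Ms HS i"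
      and x: "x = s + (\<Sum>i\<in>{1..Suc m}. t i)" by (auto simp: DID_sum_def)
    have "s + (\<Sum>i\<in>{1..m}. t i) \<in> DID_sum Ms HS m"
      unfolding DID_sum_def using s t by (intro CollectI exI[of _ s] exI[of _ t]) auto
    moreover have "x = (s + (\<Sum>i\<in>{1..m}. t i)) + t (Suc m)" using x by (simp add: add.assoc)
    ultimately show "x \<in> DID_sum Ms HS m \<oplus>\<^sub>s DID_T Ms HS (Suc m)"
      using t unfolding ssum_def by fastforce
  qed
  show "DID_sum Ms HS m \<oplus>\<^sub>s DID_T Ms HS (Suc m) \<subseteq> DID_sum Ms HS (Suc m)"
  proof
    fix x assume "x \<in> DID_sum Ms HS m \<oplus>\<^sub>s DID_T Ms HS (Suc m)"
    then obtain s t b where s: "s \<in> HS" and t: "\<forall>i\<in>{1..m}. t i \<in> DID_T Ms HS i"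
      and b: "b \<in> DID_T Ms HS (Suc m)" and x: "x = s + (\<Sum>i\<in>{1..m}. t i) + b"
      by (auto simp: ssum_def DID_sum_def)
    define t' where "t' = t(Suc m := b)"
    have "(\<Sum>i\<in>{1..m}. t' i) = (\<Sum>i\<in>{1..m}. t i)" by (rule sum.cong) (auto simp: t'_def)
    then have "x = s + (\<Sum>i\<in>{1..Suc m}. t' i)" using x by (simp add: t'_def add.assoc)
    moreover have "\<forall>i\<in>{1..Suc m}. t' i \<in> DID_T Ms HS i"
      using t b by (auto simp: t'_def le_Suc_eq)
    ultimately show "x \<in> DID_sum Ms HS (Suc m)" using s by (auto simp: DID_sum_def)
  qed
qed

text \<open>\<open>H\<^sub>S \<oplus> T\<^sub>1 \<oplus> \<dots> \<oplus> T\<^sub>n = K\<^sub>n\<^sup>\<perp>\<close>: each step adds the relative complement \<open>K\<^sub>n \<ominus> K\<^sub>n\<^sub>+\<^sub>1\<close>.\<close>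
lemma (in GAS_setting) DID_sum_dual_ker:
  "DID_sum Ms HS n = orth_compl (dual_ker Ms PS n)"
proof (induction n)
  case 0
  show ?case using subspace by (simp add: DID_sum_0 dual_ker_0[OF orth_proj] orth_compl_orth_compl)
next
  case (Suc n)
  then show ?case
    using orth_compl_split[OF csubspace_dual_ker csubspace_dual_ker dual_ker_Suc_subset]
    by (simp add: DID_sum_Suc DID_T_dual_ker)
qed

theorem proposition6:
  fixes Ms :: "('n::finite) cmat list" and HS :: "'n cvec set" and PS :: "'n cmat"
  assumes "kraus_family Ms"
    and "csubspace HS"
    and "is_orth_proj PS HS"
    and "GAS Ms HS PS"
  shows "(\<forall>n. 1 \<le> n \<and> n \<le> DID_N Ms HS \<longrightarrow>
            supp (((kraus_dual Ms) ^^ n) PS) = DID_sum Ms HS n)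
       \<and> (\<forall>n. n > DID_N Ms HS \<longrightarrow> supp (((kraus_dual Ms) ^^ n) PS) = UNIV)
       \<and> (\<forall>Ms'. kraus_family Ms' \<and> kraus_map Ms' = kraus_map Ms \<longrightarrow>
            DID_N Ms' HS = DID_N Ms HS \<and>
            (\<forall>i\<in>{1..DID_N Ms HS}. DID_T Ms' HS i = DID_T Ms HS i))"
proof -
  interpret GAS_setting Ms HS PS using assms by unfold_locales
  have supp_iter: "supp ((kraus_dual Ms ^^ n) PS) = orth_compl (dual_ker Ms PS n)" for n
    by (simp add: supp_def dual_ker_def)
  have independent: "DID_N Ms' HS = DID_N Ms HS \<and> DID_T Ms' HS = DID_T Ms HS"
    if "kraus_family Ms'" "kraus_map Ms' = kraus_map Ms" for Ms'
  proof -
    interpret Ms': GAS_setting Ms' HS PS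
      using that assms by unfold_locales (simp_all add: GAS_def invariant_def)
    have "DID_R Ms' HS = DID_R Ms HS"
      using dual_ker_independent[OF orth_proj that(2)]
      by (simp add: fun_eq_iff Ms'.DID_R_dual_ker DID_R_dual_ker)
    then show ?thesis by (simp add: DID_N_def DID_T_def fun_eq_iff)
  qed
  show ?thesis
    using DID_sum_dual_ker dual_ker_beyond_N independent
    by (simp add: supp_iter orth_compl_zero)
qed

end
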